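(* There is an absolute constant $C>0$ such that the following holds. Let $G=(V,E)$ be an unweighted graph with maximum vertex degree $d_{\max}$, and let $\{s,t\}\in E$. Then there is a subset $S\subset V$ with $s\in S$, $t\in V\setminus S$, and $$ B_{st}^{2}\leq C\, d_{\max}\,\Theta(S)^{-2}. $$
   Context: For an unweighted graph with $n$ vertices, $L=D-A$ is the graph Laplacian, $L^{+}$ its Moore–Penrose pseudoinverse, $L^{2+}=(L^+)^2$, and $1_v$ the indicator vector of vertex $v$. The biharmonic distance is $B_{st}=\sqrt{(1_s-1_t)^{T}L^{2+}(1_s-1_t)}$. For a nonempty proper subset $S\subset V$, $E(S,V\setminus S)$ is the set of edges with one endpoint in $S$ and one in $V\setminus S$, and the isoperimetric ratio is $\Theta(S)=\frac{n|E(S,V\setminus S)|}{|S||V\setminus S|}$ (the paper states the conclusion as $B_{st}^2\in O(d_{\max}\Theta(S)^{-2})$). *)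

theory Defs
  imports "Jordan_Normal_Form.Matrix"
begin

definition simple_graph :: "nat \<Rightarrow> (nat \<Rightarrow> nat \<Rightarrow> bool) \<Rightarrow> bool" where
  "simple_graph n E \<longleftrightarrow>
     (\<forall>u v. E u v \<longrightarrow> u < n \<and> v < n) \<and>
     (\<forall>u v. E u v \<longrightarrow> E v u) \<and>
     (\<forall>u. \<not> E u u)"

definition degree :: "nat \<Rightarrow> (nat \<Rightarrow> nat \<Rightarrow> bool) \<Rightarrow> nat \<Rightarrow> nat" where
  "degree n E v = card {u \<in> {0..<n}. E v u}"

definition max_degree :: "nat \<Rightarrow> (nat \<Rightarrow> nat \<Rightarrow> bool) \<Rightarrow> nat" where
  "max_degree n E = Max (degree n E ` {0..<n})"

definition laplacian :: "nat \<Rightarrow> (nat \<Rightarrow> nat \<Rightarrow> bool) \<Rightarrow> real mat" where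
  "laplacian n E = mat n n (\<lambda>(i, j).
     if i = j then real (degree n E i) else if E i j then -1 else 0)"

definition pseudo_inverse :: "nat \<Rightarrow> real mat \<Rightarrow> real mat" where
  "pseudo_inverse n A = (THE X. X \<in> carrier_mat n n \<and>
      A * X * A = A \<and> X * A * X = X \<and>
      transpose_mat (A * X) = A * X \<and> transpose_mat (X * A) = X * A)"

definition biharmonic_dist :: "nat \<Rightarrow> (nat \<Rightarrow> nat \<Rightarrow> bool) \<Rightarrow> nat \<Rightarrow> nat \<Rightarrow> real" where
  "biharmonic_dist n E s t =
     (let x = unit_vec n s - unit_vec n t;
          P = pseudo_inverse n (laplacian n E)
      in sqrt (x \<bullet> ((P * P) *\<^sub>v x)))"

text \<open>|E(S, V \ S)|: each crossing edge counted once (oriented from S to V \ S).\<close>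
definition cut_size :: "nat \<Rightarrow> (nat \<Rightarrow> nat \<Rightarrow> bool) \<Rightarrow> nat set \<Rightarrow> nat" where
  "cut_size n E S = card {(u, v). u \<in> S \<and> v \<in> {0..<n} - S \<and> E u v}"

definition iso_ratio :: "nat \<Rightarrow> (nat \<Rightarrow> nat \<Rightarrow> bool) \<Rightarrow> nat set \<Rightarrow> real" where
  "iso_ratio n E S = real n * real (cut_size n E S) / (real (card S) * real (card ({0..<n} - S)))"

end

theory Submission
  imports Defs "Jordan_Normal_Form.Determinant" "HOL-Analysis.Convex"
begin

text \<open>Let \<open>y = L\<^sup>+ (1\<^sub>s - 1\<^sub>t)\<close> be the potential of a unit current from \<open>s\<close> to \<open>t\<close>, so that
  \<open>B\<^sub>s\<^sub>t\<^sup>2 = |y|\<^sup>2\<close>. By the maximum principle \<open>y\<close> is extremal at \<open>s\<close> and \<open>t\<close>; it sums to zero,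
  and its energy \<open>y\<^sup>T L y\<close> is the effective resistance \<open>y\<^sub>s - y\<^sub>t \<le> 1\<close> across the edge \<open>st\<close>.
  Since \<open>\<Sum> y = 0\<close>, one of the truncations \<open>(y - m)\<^sup>+\<close>, \<open>(m - y)\<^sup>+\<close> at a median \<open>m\<close> carries half
  of \<open>|y|\<^sup>2\<close>, and it lives on at most \<open>n/2\<close> vertices. For such a \<open>g\<close> some level set \<open>S\<close> of \<open>g\<^sup>2\<close>
  satisfies \<open>\<Theta>(S) |g|\<^sup>2 \<le> 2 \<Sum>\<^sub>u\<^sub>v\<^sub>\<in>\<^sub>E |g\<^sub>u\<^sup>2 - g\<^sub>v\<^sup>2|\<close> (co-area formula), and by Cauchy--Schwarz the
  right-hand side is \<open>O((d\<^sub>m\<^sub>a\<^sub>x |g|\<^sup>2 g\<^sup>T L g)\<^sup>1\<^sup>/\<^sup>2)\<close>, where \<open>g\<^sup>T L g \<le> y\<^sup>T L y \<le> 1\<close>. This gives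
  \<open>\<Theta>(S)\<^sup>2 |y|\<^sup>2 \<le> 64 d\<^sub>m\<^sub>a\<^sub>x\<close>. The pseudo-inverse is identified as \<open>L\<^sup>+ = (L + P)\<^sup>-\<^sup>1 - P\<close>, where \<open>P\<close>
  averages over connected components.\<close>

section \<open>Level sets of nonnegative functions\<close>

definition upper_level :: "'a set \<Rightarrow> ('a \<Rightarrow> real) \<Rightarrow> real \<Rightarrow> 'a set" where
  "upper_level V f b = {v\<in>V. b \<le> f v}"

definition cut_card :: "('a \<times> 'a) set \<Rightarrow> 'a set \<Rightarrow> nat" where
  "cut_card Ed S = card {p\<in>Ed. fst p \<in> S \<and> snd p \<notin> S}"

definition upward_variation :: "('a \<times> 'a) set \<Rightarrow> ('a \<Rightarrow> real) \<Rightarrow> real" where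
  "upward_variation Ed f = (\<Sum>p\<in>Ed. max (f (fst p) - f (snd p)) 0)"

text \<open>Discrete co-area formula, one layer at a time: cutting \<open>f\<close> at its least positive value \<open>a\<close>
  splits off \<open>a\<close> times the indicator of \<open>upper_level V f a\<close>, and leaves a function with fewer
  positive values.\<close>

lemma peel_lowest_level:
  assumes fin: "finite V" and Ed: "Ed \<subseteq> V \<times> V" and nonneg: "\<forall>v\<in>V. 0 \<le> f v"
    and ex: "\<exists>v\<in>V. 0 < f v"
    and a_def: "a = Min {f v | v. v \<in> V \<and> 0 < f v}"
    and f'_def: "f' = (\<lambda>v. if 0 < f v then f v - a else 0)"
  shows "0 < a" "\<forall>v\<in>V. 0 \<le> f' v" "upper_level V f a \<noteq> {}"
    "upward_variation Ed f = a * cut_card Ed (upper_level V f a) + upward_variation Ed f'"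
    "sum f V = a * card (upper_level V f a) + sum f' V"
    "\<And>b. 0 < b \<Longrightarrow> upper_level V f' b = upper_level V f (a + b)"
    "card {f' v | v. v \<in> V \<and> 0 < f' v} < card {f v | v. v \<in> V \<and> 0 < f v}"
proof -
  let ?P = "{f v | v. v \<in> V \<and> 0 < f v}"
  let ?S = "upper_level V f a"
  have finP: "finite ?P" using fin by simp
  have aP: "a \<in> ?P" unfolding a_def using ex finP by (intro Min_in) auto
  then show a_pos: "0 < a" by auto
  have a_min: "a \<le> f v" if "v \<in> V" "0 < f v" for v
    unfolding a_def using finP that by (intro Min_le) auto
  show "\<forall>v\<in>V. 0 \<le> f' v" using a_min by (auto simp: f'_def)
  have S_eq: "?S = {v\<in>V. 0 < f v}" using a_min a_pos by (auto simp: upper_level_def)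
  show "?S \<noteq> {}" using ex S_eq by auto
  have edge: "max (f u - f w) 0 = (if u \<in> ?S \<and> w \<notin> ?S then a else 0) + max (f' u - f' w) 0"
    if "u \<in> V" "w \<in> V" for u w
    using that nonneg a_min[of u] a_min[of w] a_pos unfolding S_eq f'_def
    by (auto simp: max_def; linarith)
  have "upward_variation Ed f
      = (\<Sum>p\<in>Ed. (if fst p \<in> ?S \<and> snd p \<notin> ?S then a else 0) + max (f' (fst p) - f' (snd p)) 0)"
    unfolding upward_variation_def using Ed by (intro sum.cong refl edge) auto
  also have "\<dots> = a * cut_card Ed ?S + upward_variation Ed f'"
    unfolding upward_variation_def cut_card_def using finite_subset[OF Ed] fin
    by (simp add: sum.distrib sum.If_cases Int_def conj_commute)
  finally show "upward_variation Ed f = a * cut_card Ed ?S + upward_variation Ed f'" .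
  have "sum f V = (\<Sum>v\<in>V. (if v \<in> ?S then a else 0) + f' v)"
    using nonneg by (intro sum.cong refl) (auto simp: S_eq f'_def)
  also have "\<dots> = a * card ?S + sum f' V"
    using fin by (simp add: sum.distrib sum.If_cases S_eq Int_def)
  finally show "sum f V = a * card ?S + sum f' V" .
  show "upper_level V f' b = upper_level V f (a + b)" if "0 < b" for b
    using that a_pos by (auto simp: upper_level_def f'_def)
  have "{f' v | v. v \<in> V \<and> 0 < f' v} \<subseteq> (\<lambda>x. x - a) ` (?P - {a})"
    by (auto simp: f'_def)
  then have "card {f' v | v. v \<in> V \<and> 0 < f' v} \<le> card ((\<lambda>x. x - a) ` (?P - {a}))"
    using finP by (intro card_mono) auto
  also have "\<dots> \<le> card (?P - {a})" by (rule card_image_le) (use finP in auto)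
  also have "\<dots> < card ?P" by (rule card_Diff1_less[OF finP aP])
  finally show "card {f' v | v. v \<in> V \<and> 0 < f' v} < card ?P" .
qed

lemma upward_variation_ge_of_level_bound:
  fixes h :: real
  assumes fin: "finite V" and Ed: "Ed \<subseteq> V \<times> V" and "\<forall>v\<in>V. 0 \<le> f v"
    and "\<forall>b>0. h * card (upper_level V f b) \<le> cut_card Ed (upper_level V f b)"
  shows "h * sum f V \<le> upward_variation Ed f"
  using assms(3,4)
proof (induction "card {f v | v. v \<in> V \<and> 0 < f v}" arbitrary: f rule: less_induct)
  case less
  show ?case
  proof (cases "\<exists>v\<in>V. 0 < f v")
    case False
    then have "sum f V = 0" using less.prems by (intro sum.neutral) force
    moreover have "0 \<le> upward_variation Ed f" unfolding upward_variation_def by (intro sum_nonneg) auto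
    ultimately show ?thesis by simp
  next
    case True
    define a where "a = Min {f v | v. v \<in> V \<and> 0 < f v}"
    define f' where "f' = (\<lambda>v. if 0 < f v then f v - a else 0)"
    note peel = peel_lowest_level[OF fin Ed less.prems(1) True a_def f'_def]
    have "h * sum f' V \<le> upward_variation Ed f'"
    proof (rule less.hyps[OF peel(7) peel(2)], intro allI impI)
      fix b :: real assume "0 < b"
      then show "h * card (upper_level V f' b) \<le> cut_card Ed (upper_level V f' b)"
        using peel(6)[of b] less.prems(2) peel(1) by (metis add_pos_pos)
    qed
    moreover have "a * (h * card (upper_level V f a)) \<le> a * cut_card Ed (upper_level V f a)"
      using less.prems(2) peel(1) by (intro mult_left_mono) auto
    ultimately show ?thesis unfolding peel(4) peel(5) by (simp add: algebra_simps)
  qed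
qed

lemma exists_level_set_cut_le:
  fixes f :: "'a \<Rightarrow> real"
  assumes fin: "finite V" and Ed: "Ed \<subseteq> V \<times> V" and nonneg: "\<forall>v\<in>V. 0 \<le> f v"
    and ex: "\<exists>v\<in>V. 0 < f v"
  shows "\<exists>b>0. upper_level V f b \<noteq> {} \<and>
    real (cut_card Ed (upper_level V f b)) * sum f V \<le> upward_variation Ed f * card (upper_level V f b)"
proof (rule ccontr)
  define F where "F = sum f V"
  define h where "h = upward_variation Ed f / F"
  have F: "0 < F" unfolding F_def using fin nonneg ex by (metis sum_pos2)
  assume "\<not> ?thesis"
  then have strict: "h * card (upper_level V f b) < cut_card Ed (upper_level V f b)"
    if "0 < b" "upper_level V f b \<noteq> {}" for b
    using that F by (auto simp: h_def F_def[symmetric] not_le field_simps)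
  define a where "a = Min {f v | v. v \<in> V \<and> 0 < f v}"
  define f' where "f' = (\<lambda>v. if 0 < f v then f v - a else 0)"
  note peel = peel_lowest_level[OF fin Ed nonneg ex a_def f'_def]
  have "h * sum f' V \<le> upward_variation Ed f'"
  proof (rule upward_variation_ge_of_level_bound[OF fin Ed peel(2)], intro allI impI)
    fix b :: real assume b: "0 < b"
    show "h * card (upper_level V f' b) \<le> cut_card Ed (upper_level V f' b)"
    proof (cases "upper_level V f' b = {}")
      case False
      then show ?thesis using peel(6)[OF b] strict peel(1) b by (metis add_pos_pos less_imp_le)
    qed simp
  qed
  moreover have "a * (h * card (upper_level V f a)) < a * cut_card Ed (upper_level V f a)"
    using strict[OF peel(1) peel(3)] peel(1) by (rule mult_strict_left_mono)
  ultimately have "h * F < upward_variation Ed f"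
    unfolding F_def peel(4) peel(5) by (simp add: algebra_simps)
  then show False using F by (simp add: h_def)
qed

lemma exists_median:
  fixes y :: "'a \<Rightarrow> real"
  assumes fin: "finite V" and ne: "V \<noteq> {}"
  shows "\<exists>m\<in>y ` V. 2 * card {v\<in>V. m < y v} \<le> card V \<and> 2 * card {v\<in>V. y v < m} \<le> card V"
proof -
  define A where "A = {a\<in>y ` V. card V \<le> 2 * card {v\<in>V. a \<le> y v}}"
  have finA: "finite A" unfolding A_def using fin by simp
  have "{v\<in>V. Min (y ` V) \<le> y v} = V" using fin by auto
  then have "Min (y ` V) \<in> A" unfolding A_def using fin ne by auto
  then have neA: "A \<noteq> {}" by auto
  define m where "m = Max A"
  have mA: "m \<in> A" unfolding m_def using finA neA by simp
  have above: "2 * card {v\<in>V. m < y v} \<le> card V"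
  proof (cases "{v\<in>V. m < y v} = {}")
    case True
    then show ?thesis by (subst True) simp
  next
    case False
    define a' where "a' = Min (y ` {v\<in>V. m < y v})"
    have a'_in: "a' \<in> y ` {v\<in>V. m < y v}" unfolding a'_def using fin False by (intro Min_in) auto
    then have "m < a'" by auto
    have eq: "{v\<in>V. a' \<le> y v} = {v\<in>V. m < y v}"
      using \<open>m < a'\<close> fin by (auto simp: a'_def intro: Min_le)
    have "a' \<notin> A"
      using \<open>m < a'\<close> finA by (auto simp: m_def dest: Max_ge)
    moreover have "a' \<in> y ` V" using a'_in by auto
    ultimately show ?thesis using eq unfolding A_def by auto
  qed
  have below: "2 * card {v\<in>V. y v < m} \<le> card V"
  proof -
    have "V = {v\<in>V. y v < m} \<union> {v\<in>V. m \<le> y v}" by auto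
    then have "card V = card {v\<in>V. y v < m} + card {v\<in>V. m \<le> y v}"
      by (subst card_Un_disjoint[symmetric]) (use fin in auto)
    moreover have "card V \<le> 2 * card {v\<in>V. m \<le> y v}" using mA unfolding A_def by auto
    ultimately show ?thesis by linarith
  qed
  show ?thesis using mA above below unfolding A_def by auto
qed

section \<open>Edges, cuts and the Dirichlet energy\<close>

definition edges :: "nat \<Rightarrow> (nat \<Rightarrow> nat \<Rightarrow> bool) \<Rightarrow> (nat \<times> nat) set" where
  "edges n E = {(u, v). u < n \<and> v < n \<and> E u v}"

definition neighbours :: "nat \<Rightarrow> (nat \<Rightarrow> nat \<Rightarrow> bool) \<Rightarrow> nat \<Rightarrow> nat set" where
  "neighbours n E v = {k\<in>{0..<n}. E v k}"

text \<open>Every edge occurs in \<open>edges n E\<close> in both orientations, so this is \<open>2 f\<^sup>T L f\<close>.\<close>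

definition dirichlet_energy :: "nat \<Rightarrow> (nat \<Rightarrow> nat \<Rightarrow> bool) \<Rightarrow> (nat \<Rightarrow> real) \<Rightarrow> real" where
  "dirichlet_energy n E f = (\<Sum>p\<in>edges n E. (f (fst p) - f (snd p))\<^sup>2)"

lemma edges_subset: "edges n E \<subseteq> {0..<n} \<times> {0..<n}"
  by (auto simp: edges_def)

lemma finite_edges: "finite (edges n E)"
  using edges_subset by (rule finite_subset) auto

lemma sum_edges_eq_sum_neighbours:
  "(\<Sum>p\<in>edges n E. g (fst p) (snd p)) = (\<Sum>u\<in>{0..<n}. \<Sum>v\<in>neighbours n E u. g u v)"
proof -
  have "edges n E = Sigma {0..<n} (neighbours n E)" by (auto simp: edges_def neighbours_def)
  then show ?thesis by (simp only:) (subst sum.Sigma, auto simp: neighbours_def case_prod_beta)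
qed

lemma sum_edges_fst:
  fixes g :: "nat \<Rightarrow> real"
  shows "(\<Sum>p\<in>edges n E. g (fst p)) = (\<Sum>u\<in>{0..<n}. real (Defs.degree n E u) * g u)"
  by (simp add: sum_edges_eq_sum_neighbours[where g = "\<lambda>u v. g u"] Defs.degree_def neighbours_def)

lemma sum_edges_swap:
  assumes sg: "simple_graph n E"
  shows "(\<Sum>p\<in>edges n E. g (fst p) (snd p)) = (\<Sum>p\<in>edges n E. g (snd p) (fst p))"
proof -
  have "prod.swap ` edges n E = edges n E" using sg unfolding simple_graph_def edges_def by auto
  then have "(\<Sum>p\<in>edges n E. g (fst p) (snd p)) = (\<Sum>p\<in>prod.swap ` edges n E. g (fst p) (snd p))"
    by simp
  also have "\<dots> = (\<Sum>p\<in>edges n E. g (snd p) (fst p))" by (subst sum.reindex) auto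
  finally show ?thesis .
qed

lemma dirichlet_energy_nonneg: "0 \<le> dirichlet_energy n E f"
  unfolding dirichlet_energy_def by (intro sum_nonneg) auto

lemma dirichlet_energy_contraction:
  assumes "\<And>a b. \<bar>\<phi> a - \<phi> b\<bar> \<le> \<bar>a - b\<bar>"
  shows "dirichlet_energy n E (\<lambda>v. \<phi> (f v)) \<le> dirichlet_energy n E f"
  unfolding dirichlet_energy_def
  by (intro sum_mono) (metis abs_ge_zero assms power2_abs power_mono)

lemma laplacian_quadratic_form:
  fixes f :: "nat \<Rightarrow> real"
  assumes sg: "simple_graph n E"
  shows "(\<Sum>i\<in>{0..<n}. f i * (\<Sum>k\<in>neighbours n E i. f i - f k)) = dirichlet_energy n E f / 2"
proof -
  let ?g = "\<lambda>a b. f a * (f a - f b)"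
  have "(\<Sum>i\<in>{0..<n}. f i * (\<Sum>k\<in>neighbours n E i. f i - f k)) = (\<Sum>p\<in>edges n E. ?g (fst p) (snd p))"
    by (simp add: sum_edges_eq_sum_neighbours[of ?g] sum_distrib_left)
  moreover have "(\<Sum>p\<in>edges n E. ?g (fst p) (snd p)) = (\<Sum>p\<in>edges n E. ?g (snd p) (fst p))"
    by (rule sum_edges_swap[OF sg])
  moreover have "(\<Sum>p\<in>edges n E. ?g (fst p) (snd p)) + (\<Sum>p\<in>edges n E. ?g (snd p) (fst p))
      = dirichlet_energy n E f"
    unfolding dirichlet_energy_def by (simp add: sum.distrib[symmetric] power2_eq_square algebra_simps)
  ultimately show ?thesis by linarith
qed

lemma degree_le_max_degree: "u < n \<Longrightarrow> Defs.degree n E u \<le> max_degree n E"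
  unfolding max_degree_def by (intro Max_ge) auto

lemma cut_size_eq_cut_card: "S \<subseteq> {0..<n} \<Longrightarrow> cut_size n E S = cut_card (edges n E) S"
  unfolding cut_size_def cut_card_def edges_def by (intro arg_cong[where f = card]) auto

lemma iso_ratio_nonneg: "0 \<le> iso_ratio n E S"
  unfolding iso_ratio_def by simp

lemma iso_ratio_pos:
  assumes sg: "simple_graph n E" and Est: "E s t"
    and SV: "S \<subseteq> {0..<n}" and sS: "s \<in> S" and tS: "t \<notin> S"
  shows "0 < iso_ratio n E S"
proof -
  have st: "s < n" "t < n" using sg Est unfolding simple_graph_def by auto
  have "(s, t) \<in> {(u, v). u \<in> S \<and> v \<in> {0..<n} - S \<and> E u v}" using sS tS st Est by auto
  moreover have "finite {(u, v). u \<in> S \<and> v \<in> {0..<n} - S \<and> E u v}"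
    by (rule finite_subset[of _ "{0..<n} \<times> {0..<n}"]) (use SV in auto)
  ultimately have "0 < cut_size n E S" unfolding cut_size_def by (auto simp: card_gt_0_iff)
  moreover have "0 < card S" using sS SV by (auto simp: card_gt_0_iff intro: finite_subset)
  moreover have "0 < card ({0..<n} - S)" using tS st by (auto simp: card_gt_0_iff)
  ultimately show ?thesis unfolding iso_ratio_def using st by simp
qed

lemma iso_ratio_complement:
  assumes sg: "simple_graph n E" and SV: "S \<subseteq> {0..<n}"
  shows "iso_ratio n E ({0..<n} - S) = iso_ratio n E S"
proof -
  have "cut_size n E ({0..<n} - S) = card (prod.swap ` {(u, v). u \<in> S \<and> v \<in> {0..<n} - S \<and> E u v})"
    unfolding cut_size_def using sg SV unfolding simple_graph_def
    by (intro arg_cong[where f = card]) auto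
  also have "\<dots> = cut_size n E S" unfolding cut_size_def by (rule card_image) simp
  finally have "cut_size n E ({0..<n} - S) = cut_size n E S" .
  moreover have "{0..<n} - ({0..<n} - S) = S" using SV by auto
  ultimately show ?thesis unfolding iso_ratio_def by (simp add: mult.commute)
qed

lemma iso_ratio_mult_card_le:
  assumes SV: "S \<subseteq> {0..<n}" and half: "2 * card S \<le> n"
  shows "iso_ratio n E S * card S \<le> 2 * cut_size n E S"
proof (cases "S = {}")
  case False
  define k where "k = card S"
  have k: "0 < k" using False SV unfolding k_def by (meson card_gt_0_iff finite_atLeastLessThan finite_subset)
  have "card ({0..<n} - S) = n - k" unfolding k_def using SV by (simp add: card_Diff_subset finite_subset)
  then have "iso_ratio n E S * k = real n * cut_size n E S / real (n - k)"
    unfolding iso_ratio_def k_def[symmetric] using k by simp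
  also have "\<dots> \<le> 2 * cut_size n E S"
  proof -
    have "2 * k \<le> n" using half unfolding k_def .
    then have "real n * cut_size n E S \<le> (2 * (real n - real k)) * cut_size n E S"
      by (intro mult_right_mono) auto
    then show ?thesis using \<open>2 * k \<le> n\<close> k by (simp add: divide_simps of_nat_diff algebra_simps)
  qed
  finally show ?thesis unfolding k_def .
qed simp

section \<open>Sweep cuts\<close>

lemma upward_variation_squares_le:
  fixes g :: "nat \<Rightarrow> real"
  assumes sg: "simple_graph n E" and g_nonneg: "\<And>v. 0 \<le> g v"
  shows "(upward_variation (edges n E) (\<lambda>v. (g v)\<^sup>2))\<^sup>2
    \<le> 4 * real (max_degree n E) * (\<Sum>v\<in>{0..<n}. (g v)\<^sup>2) * dirichlet_energy n E g"
proof -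
  let ?Ed = "edges n E"
  define D where "D = upward_variation ?Ed (\<lambda>v. (g v)\<^sup>2)"
  have D_nonneg: "0 \<le> D" unfolding D_def upward_variation_def by (intro sum_nonneg) auto
  have term_bound: "max ((g u)\<^sup>2 - (g v)\<^sup>2) 0 \<le> \<bar>g u - g v\<bar> * (g u + g v)" for u v
  proof -
    have "(g u)\<^sup>2 - (g v)\<^sup>2 = (g u - g v) * (g u + g v)" by (simp add: power2_eq_square algebra_simps)
    also have "\<dots> \<le> \<bar>g u - g v\<bar> * (g u + g v)"
      using g_nonneg[of u] g_nonneg[of v] by (intro mult_right_mono) auto
    finally show ?thesis using g_nonneg[of u] g_nonneg[of v] by simp
  qed
  have sum_bound: "(\<Sum>p\<in>?Ed. (g (fst p) + g (snd p))\<^sup>2)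
      \<le> 4 * real (max_degree n E) * (\<Sum>v\<in>{0..<n}. (g v)\<^sup>2)"
  proof -
    have "(\<Sum>p\<in>?Ed. (g (fst p) + g (snd p))\<^sup>2) \<le> (\<Sum>p\<in>?Ed. 2 * (g (fst p))\<^sup>2 + 2 * (g (snd p))\<^sup>2)"
    proof (intro sum_mono)
      fix p :: "nat \<times> nat"
      show "(g (fst p) + g (snd p))\<^sup>2 \<le> 2 * (g (fst p))\<^sup>2 + 2 * (g (snd p))\<^sup>2"
        using sum_squares_bound[of "g (fst p)" "g (snd p)"] by (simp add: power2_sum)
    qed
    also have "\<dots> = 4 * (\<Sum>p\<in>?Ed. (g (fst p))\<^sup>2)"
      using sum_edges_swap[OF sg, of "\<lambda>a b. (g b)\<^sup>2"] by (simp add: sum.distrib flip: sum_distrib_left)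
    also have "\<dots> = 4 * (\<Sum>u\<in>{0..<n}. real (Defs.degree n E u) * (g u)\<^sup>2)"
      using sum_edges_fst[where g = "\<lambda>u. (g u)\<^sup>2"] by simp
    also have "\<dots> \<le> 4 * (\<Sum>u\<in>{0..<n}. real (max_degree n E) * (g u)\<^sup>2)"
      using degree_le_max_degree by (intro mult_left_mono sum_mono mult_right_mono) auto
    finally show ?thesis by (simp add: sum_distrib_left mult_ac)
  qed
  have "D \<le> (\<Sum>p\<in>?Ed. \<bar>g (fst p) - g (snd p)\<bar> * (g (fst p) + g (snd p)))"
    unfolding D_def upward_variation_def by (intro sum_mono term_bound)
  then have "D\<^sup>2 \<le> (\<Sum>p\<in>?Ed. \<bar>g (fst p) - g (snd p)\<bar> * (g (fst p) + g (snd p)))\<^sup>2"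
    using D_nonneg by (simp add: power_mono)
  also have "\<dots> \<le> (\<Sum>p\<in>?Ed. \<bar>g (fst p) - g (snd p)\<bar>\<^sup>2) * (\<Sum>p\<in>?Ed. (g (fst p) + g (snd p))\<^sup>2)"
    by (rule Cauchy_Schwarz_ineq_sum)
  also have "\<dots> = dirichlet_energy n E g * (\<Sum>p\<in>?Ed. (g (fst p) + g (snd p))\<^sup>2)"
    unfolding dirichlet_energy_def by simp
  also have "\<dots> \<le> dirichlet_energy n E g * (4 * real (max_degree n E) * (\<Sum>v\<in>{0..<n}. (g v)\<^sup>2))"
    using sum_bound dirichlet_energy_nonneg by (rule mult_left_mono)
  finally show ?thesis unfolding D_def by (simp add: mult_ac)
qed

text \<open>The cut is a level set of \<open>g\<^sup>2\<close>; as \<open>g\<close> is maximal at \<open>s\<close>, every nonempty level set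
  contains \<open>s\<close>.\<close>

lemma sweep_cut_bound:
  fixes g :: "nat \<Rightarrow> real"
  assumes sg: "simple_graph n E" and s: "s < n"
    and g_nonneg: "\<And>v. 0 \<le> g v" and g_max: "\<And>v. v < n \<Longrightarrow> g v \<le> g s" and g_t: "g t = 0"
    and support: "2 * card {v\<in>{0..<n}. 0 < g v} \<le> n"
    and F_pos: "0 < (\<Sum>v\<in>{0..<n}. (g v)\<^sup>2)"
  shows "\<exists>S\<subseteq>{0..<n}. s \<in> S \<and> t \<notin> S \<and>
    (iso_ratio n E S)\<^sup>2 * (\<Sum>v\<in>{0..<n}. (g v)\<^sup>2) \<le> 16 * real (max_degree n E) * dirichlet_energy n E g"
proof -
  let ?V = "{0..<n}"
  define f where "f v = (g v)\<^sup>2" for v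
  define F where "F = sum f ?V"
  define D where "D = upward_variation (edges n E) f"
  have F: "0 < F" using F_pos by (simp add: F_def f_def)
  have "\<exists>v\<in>?V. 0 < f v"
  proof (rule ccontr)
    assume "\<not> ?thesis"
    then have "F = 0" unfolding F_def f_def by (intro sum.neutral) auto
    then show False using F by simp
  qed
  then obtain b where b: "0 < b" and ne: "upper_level ?V f b \<noteq> {}"
    and cut: "real (cut_card (edges n E) (upper_level ?V f b)) * F \<le> D * card (upper_level ?V f b)"
    using exists_level_set_cut_le[OF _ edges_subset[of n E], where f = f] unfolding F_def D_def f_def by auto
  define S where "S = upper_level ?V f b"
  have SV: "S \<subseteq> ?V" unfolding S_def upper_level_def by auto
  have S_pos: "S \<subseteq> {v\<in>?V. 0 < g v}"
    using b g_nonneg by (auto simp: S_def upper_level_def f_def less_le)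
  obtain w where w: "w \<in> S" using ne S_def by auto
  have "f w \<le> f s" unfolding f_def using g_max[of w] w SV g_nonneg by (auto intro: power_mono)
  then have sS: "s \<in> S" using w s unfolding S_def upper_level_def by auto
  have tS: "t \<notin> S" using b g_t unfolding S_def upper_level_def f_def by auto
  have "card S \<le> card {v\<in>?V. 0 < g v}" using S_pos by (intro card_mono) auto
  then have half: "2 * card S \<le> n" using support by linarith
  have k: "0 < card S" using sS SV by (auto simp: card_gt_0_iff intro: finite_subset)
  have "iso_ratio n E S * F * card S \<le> 2 * cut_size n E S * F"
    using iso_ratio_mult_card_le[OF SV half, of E] F by (simp add: mult_ac)
  also have "\<dots> \<le> 2 * D * card S"
    using cut cut_size_eq_cut_card[OF SV, of E] by (simp add: S_def)
  finally have iso_F: "iso_ratio n E S * F \<le> 2 * D" using k by simp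
  have "(iso_ratio n E S)\<^sup>2 * F * F = (iso_ratio n E S * F)\<^sup>2" by (simp add: power2_eq_square)
  also have "\<dots> \<le> (2 * D)\<^sup>2"
    using iso_F iso_ratio_nonneg[of n E S] F by (intro power_mono) auto
  also have "\<dots> \<le> 16 * real (max_degree n E) * dirichlet_energy n E g * F"
    using upward_variation_squares_le[OF sg, of g] g_nonneg unfolding D_def f_def F_def
    by (simp add: power_mult_distrib mult_ac)
  finally show ?thesis using F SV sS tS by (intro exI[of _ S]) (simp add: F_def f_def mult_ac)
qed

lemma sum_squares_le_split:
  fixes y :: "'a \<Rightarrow> real"
  assumes "sum y V = 0"
  shows "(\<Sum>v\<in>V. (y v)\<^sup>2) \<le> (\<Sum>v\<in>V. (max (y v - m) 0)\<^sup>2) + (\<Sum>v\<in>V. (max (m - y v) 0)\<^sup>2)"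
proof -
  have "(max (y v - m) 0)\<^sup>2 + (max (m - y v) 0)\<^sup>2 = (y v)\<^sup>2 - 2 * m * y v + m\<^sup>2" for v
    by (cases "m \<le> y v") (auto simp: power2_eq_square algebra_simps max_def)
  then have "(\<Sum>v\<in>V. (max (y v - m) 0)\<^sup>2) + (\<Sum>v\<in>V. (max (m - y v) 0)\<^sup>2)
      = (\<Sum>v\<in>V. (y v)\<^sup>2 - 2 * m * y v + m\<^sup>2)"
    by (simp add: sum.distrib[symmetric])
  also have "\<dots> = (\<Sum>v\<in>V. (y v)\<^sup>2) - 2 * m * sum y V + card V * m\<^sup>2"
    by (simp add: sum.distrib sum_subtractf sum_distrib_left)
  finally show ?thesis using assms by simp
qed

lemma sweep_cut_bound_upper_part:
  fixes y :: "nat \<Rightarrow> real"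
  assumes sg: "simple_graph n E" and s: "s < n"
    and between: "\<And>v. v < n \<Longrightarrow> y t \<le> y v \<and> y v \<le> y s" and "y t \<le> m"
    and above: "2 * card {v\<in>{0..<n}. m < y v} \<le> n"
    and heavy: "(\<Sum>v\<in>{0..<n}. (y v)\<^sup>2) \<le> 2 * (\<Sum>v\<in>{0..<n}. (max (y v - m) 0)\<^sup>2)"
    and pos: "0 < (\<Sum>v\<in>{0..<n}. (max (y v - m) 0)\<^sup>2)"
  shows "\<exists>S\<subseteq>{0..<n}. s \<in> S \<and> t \<notin> S \<and>
    (iso_ratio n E S)\<^sup>2 * (\<Sum>v\<in>{0..<n}. (y v)\<^sup>2) \<le> 32 * real (max_degree n E) * dirichlet_energy n E y"
proof -
  let ?V = "{0..<n}" and ?d = "real (max_degree n E)"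
  define g where "g v = max (y v - m) 0" for v
  have g_max: "g v \<le> g s" if "v < n" for v using between[OF that] by (auto simp: g_def)
  have support: "{v\<in>?V. 0 < g v} = {v\<in>?V. m < y v}" by (auto simp: g_def)
  have "\<exists>S\<subseteq>?V. s \<in> S \<and> t \<notin> S \<and>
      (iso_ratio n E S)\<^sup>2 * (\<Sum>v\<in>?V. (g v)\<^sup>2) \<le> 16 * ?d * dirichlet_energy n E g"
  proof (rule sweep_cut_bound[OF sg s])
    show "0 \<le> g v" for v by (simp add: g_def)
    show "g v \<le> g s" if "v < n" for v using g_max[OF that] .
    show "g t = 0" using \<open>y t \<le> m\<close> by (simp add: g_def)
    show "2 * card {v\<in>?V. 0 < g v} \<le> n" using above unfolding support .
    show "0 < (\<Sum>v\<in>?V. (g v)\<^sup>2)" using pos by (simp add: g_def)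
  qed
  then obtain S where S: "S \<subseteq> ?V" "s \<in> S" "t \<notin> S"
    and bound: "(iso_ratio n E S)\<^sup>2 * (\<Sum>v\<in>?V. (g v)\<^sup>2) \<le> 16 * ?d * dirichlet_energy n E g"
    by blast
  have "dirichlet_energy n E g \<le> dirichlet_energy n E y"
    unfolding g_def by (rule dirichlet_energy_contraction) (auto simp: max_def abs_if)
  then have "16 * ?d * dirichlet_energy n E g \<le> 16 * ?d * dirichlet_energy n E y"
    by (rule mult_left_mono) simp
  moreover have "(iso_ratio n E S)\<^sup>2 * (\<Sum>v\<in>?V. (y v)\<^sup>2) \<le> 2 * ((iso_ratio n E S)\<^sup>2 * (\<Sum>v\<in>?V. (g v)\<^sup>2))"
    using mult_left_mono[OF heavy, of "(iso_ratio n E S)\<^sup>2"] by (simp add: g_def mult_ac)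
  ultimately show ?thesis using S bound by (intro exI[of _ S]) auto
qed

text \<open>The lower part \<open>(m - y)\<^sup>+\<close> is the upper part of \<open>-y\<close>, with the roles of \<open>s\<close> and \<open>t\<close> and of
  \<open>S\<close> and its complement exchanged.\<close>

lemma sweep_cut_bound_sum_squares:
  fixes y :: "nat \<Rightarrow> real"
  assumes sg: "simple_graph n E" and Est: "E s t"
    and between: "\<And>v. v < n \<Longrightarrow> y t \<le> y v \<and> y v \<le> y s"
    and sum_zero: "(\<Sum>v\<in>{0..<n}. y v) = 0"
  shows "\<exists>S\<subseteq>{0..<n}. s \<in> S \<and> t \<notin> S \<and>
    (iso_ratio n E S)\<^sup>2 * (\<Sum>v\<in>{0..<n}. (y v)\<^sup>2) \<le> 32 * real (max_degree n E) * dirichlet_energy n E y"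
proof -
  let ?V = "{0..<n}" and ?d = "real (max_degree n E)"
  have st: "s < n" "t < n" "s \<noteq> t" using sg Est unfolding simple_graph_def by auto
  obtain m where m: "m \<in> y ` ?V" and above: "2 * card {v\<in>?V. m < y v} \<le> n"
    and below: "2 * card {v\<in>?V. y v < m} \<le> n"
    using exists_median[of ?V y] st by auto
  have mt: "y t \<le> m" "m \<le> y s" using m between by auto
  let ?Y = "\<Sum>v\<in>?V. (y v)\<^sup>2"
  let ?G = "\<Sum>v\<in>?V. (max (y v - m) 0)\<^sup>2" and ?H = "\<Sum>v\<in>?V. (max (m - y v) 0)\<^sup>2"
  have split: "?Y \<le> ?G + ?H" by (rule sum_squares_le_split[OF sum_zero])
  show ?thesis
  proof (cases "?Y = 0")
    case True
    then show ?thesis using st dirichlet_energy_nonneg[of n E y] by (intro exI[of _ "{s}"]) auto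
  next
    case False
    then have "0 < ?Y" using sum_nonneg[of ?V "\<lambda>v. (y v)\<^sup>2"] by simp
    show ?thesis
    proof (cases "?Y \<le> 2 * ?G")
      case True
      then have "0 < ?G" using \<open>0 < ?Y\<close> by linarith
      then show ?thesis using sweep_cut_bound_upper_part[OF sg st(1) between mt(1) above True] by blast
    next
      case False
      then have "?Y \<le> 2 * ?H" "0 < ?H" using split \<open>0 < ?Y\<close> by linarith+
      have neg: "max (- y v - - m) 0 = max (m - y v) 0" for v by simp
      have "\<exists>S'\<subseteq>?V. t \<in> S' \<and> s \<notin> S' \<and>
          (iso_ratio n E S')\<^sup>2 * (\<Sum>v\<in>?V. (- y v)\<^sup>2) \<le> 32 * ?d * dirichlet_energy n E (\<lambda>v. - y v)"
      proof (rule sweep_cut_bound_upper_part[OF sg st(2), where m = "- m"])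
        show "- y s \<le> - y v \<and> - y v \<le> - y t" if "v < n" for v using between[OF that] by simp
        show "- y s \<le> - m" using mt by simp
        show "2 * card {v\<in>?V. - m < - y v} \<le> n" using below by simp
        show "(\<Sum>v\<in>?V. (- y v)\<^sup>2) \<le> 2 * (\<Sum>v\<in>?V. (max (- y v - - m) 0)\<^sup>2)"
          using \<open>?Y \<le> 2 * ?H\<close> by (simp only: neg power2_minus)
        show "0 < (\<Sum>v\<in>?V. (max (- y v - - m) 0)\<^sup>2)" using \<open>0 < ?H\<close> by (simp only: neg)
      qed
      then obtain S' where S': "S' \<subseteq> ?V" "t \<in> S'" "s \<notin> S'"
        and bound: "(iso_ratio n E S')\<^sup>2 * ?Y \<le> 32 * ?d * dirichlet_energy n E (\<lambda>v. - y v)"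
        by (auto simp only: power2_minus)
      have "dirichlet_energy n E (\<lambda>v. - y v) = dirichlet_energy n E y"
        unfolding dirichlet_energy_def by (simp add: power2_commute)
      moreover have "iso_ratio n E (?V - S') = iso_ratio n E S'"
        by (rule iso_ratio_complement[OF sg S'(1)])
      ultimately show ?thesis using S' st bound by (intro exI[of _ "?V - S'"]) auto
    qed
  qed
qed

section \<open>Connected components and the maximum principle\<close>

definition component :: "nat \<Rightarrow> (nat \<Rightarrow> nat \<Rightarrow> bool) \<Rightarrow> nat \<Rightarrow> nat set" where
  "component n E r = {u. u < n \<and> E\<^sup>*\<^sup>* r u}"

lemma simple_graph_reach_sym: "simple_graph n E \<Longrightarrow> E\<^sup>*\<^sup>* a b \<Longrightarrow> E\<^sup>*\<^sup>* b a"
  by (rule sympD[OF symp_rtranclp]) (auto simp: simple_graph_def symp_def)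

lemma component_eq:
  assumes sg: "simple_graph n E" and "E\<^sup>*\<^sup>* a b"
  shows "component n E a = component n E b"
  using assms simple_graph_reach_sym[OF sg] unfolding component_def
  by (auto intro: rtranclp_trans)

lemma finite_component: "finite (component n E r)"
  unfolding component_def by auto

lemma self_in_component: "r < n \<Longrightarrow> r \<in> component n E r"
  unfolding component_def by auto

lemma card_component_pos: "r < n \<Longrightarrow> 0 < card (component n E r)"
  using self_in_component finite_component by (metis card_gt_0_iff empty_iff)

lemma component_edge_closed:
  "simple_graph n E \<Longrightarrow> u \<in> component n E r \<Longrightarrow> E u w \<Longrightarrow> w \<in> component n E r"
  unfolding component_def simple_graph_def by (auto intro: rtranclp.rtrancl_into_rtrancl)

text \<open>Otherwise the set where \<open>y\<close> attains its maximum on the component would be closed under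
  edges and miss \<open>s\<close>.\<close>

lemma max_principle:
  fixes y :: "nat \<Rightarrow> real"
  assumes sg: "simple_graph n E" and s: "s \<in> component n E r"
    and sub: "\<And>v. v \<in> component n E r \<Longrightarrow> v \<noteq> s \<Longrightarrow> (\<Sum>k\<in>neighbours n E v. y v - y k) \<le> 0"
    and v: "v \<in> component n E r"
  shows "y v \<le> y s"
proof (rule ccontr)
  let ?K = "component n E r"
  assume "\<not> y v \<le> y s"
  define M where "M = Max (y ` ?K)"
  define T where "T = {u\<in>?K. y u = M}"
  have M_ge: "y u \<le> M" if "u \<in> ?K" for u unfolding M_def using finite_component that by auto
  have "M \<in> y ` ?K" unfolding M_def using finite_component v by (intro Max_in) auto
  then obtain w where w: "w \<in> T" unfolding T_def by auto
  have sT: "s \<notin> T" using M_ge[OF v] \<open>\<not> y v \<le> y s\<close> unfolding T_def by auto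
  have closed: "b \<in> T" if a: "a \<in> T" and ab: "E a b" for a b
  proof -
    have aK: "a \<in> ?K" and ya: "y a = M" using a unfolding T_def by auto
    have nonneg: "\<forall>k\<in>neighbours n E a. 0 \<le> y a - y k"
      using M_ge component_edge_closed[OF sg aK] ya unfolding neighbours_def by auto
    have "(\<Sum>k\<in>neighbours n E a. y a - y k) \<le> 0" using sub[OF aK] a sT by auto
    then have "(\<Sum>k\<in>neighbours n E a. y a - y k) = 0" using nonneg by (meson antisym sum_nonneg)
    then have "\<forall>k\<in>neighbours n E a. y a - y k = 0"
      using nonneg by (subst sum_nonneg_eq_0_iff[symmetric]) (auto simp: neighbours_def)
    moreover have "b \<in> neighbours n E a"
      using component_edge_closed[OF sg aK ab] ab unfolding neighbours_def component_def by auto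
    ultimately show ?thesis using component_edge_closed[OF sg aK ab] ya unfolding T_def by auto
  qed
  have "E\<^sup>*\<^sup>* r w" "E\<^sup>*\<^sup>* r s" using w s unfolding T_def component_def by auto
  then have "E\<^sup>*\<^sup>* w s" using simple_graph_reach_sym[OF sg] by (meson rtranclp_trans)
  then have "s \<in> T" by (induction rule: rtranclp_induct) (use w closed in auto)
  then show False using sT by simp
qed

section \<open>The potential of a unit current\<close>

text \<open>The vector \<open>y = L\<^sup>+ (1\<^sub>s - 1\<^sub>t)\<close>: it solves \<open>L y = 1\<^sub>s - 1\<^sub>t\<close> and is orthogonal to the kernel
  of \<open>L\<close>, which consists of the functions constant on components.\<close>

definition unit_current_potential ::
    "nat \<Rightarrow> (nat \<Rightarrow> nat \<Rightarrow> bool) \<Rightarrow> nat \<Rightarrow> nat \<Rightarrow> (nat \<Rightarrow> real) \<Rightarrow> bool" where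
  "unit_current_potential n E s t y \<longleftrightarrow>
     (\<forall>i<n. (\<Sum>k\<in>neighbours n E i. y i - y k) = (if i = s then 1 else 0) - (if i = t then 1 else 0)) \<and>
     (\<forall>i<n. (\<Sum>k\<in>component n E i. y k) = 0)"

lemma potential_bounds_on_component:
  assumes sg: "simple_graph n E" and Est: "E s t" and pot: "unit_current_potential n E s t y"
    and v: "v \<in> component n E s"
  shows "y t \<le> y v \<and> y v \<le> y s"
proof
  have st: "s < n" "t < n" using sg Est unfolding simple_graph_def by auto
  have laplace: "(\<Sum>k\<in>neighbours n E u. y u - y k) = (if u = s then 1 else 0) - (if u = t then 1 else 0)"
    if "u \<in> component n E s" for u
    using pot that unfolding unit_current_potential_def component_def by auto
  show "y v \<le> y s"
    by (rule max_principle[OF sg self_in_component[OF st(1)] _ v]) (simp add: laplace)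
  have "t \<in> component n E s" using st Est unfolding component_def by auto
  have "- y v \<le> - y t"
  proof (rule max_principle[OF sg \<open>t \<in> component n E s\<close> _ v])
    fix u assume "u \<in> component n E s" "u \<noteq> t"
    then show "(\<Sum>k\<in>neighbours n E u. - y u - - y k) \<le> 0"
      using laplace[of u] sum_negf[of "\<lambda>k. y u - y k" "neighbours n E u"] by simp
  qed
  then show "y t \<le> y v" by simp
qed

lemma potential_vanishes_off_component:
  assumes sg: "simple_graph n E" and Est: "E s t" and pot: "unit_current_potential n E s t y"
    and v: "v < n" "v \<notin> component n E s"
  shows "y v = 0"
proof -
  let ?D = "component n E v"
  have "component n E t = component n E s" using component_eq[OF sg, of s t] Est by auto
  then have st_D: "s \<notin> ?D" "t \<notin> ?D"
    using v self_in_component component_eq[OF sg] unfolding component_def by blast+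
  have harmonic: "(\<Sum>k\<in>neighbours n E u. y u - y k) = 0" if "u \<in> ?D" for u
    using pot that st_D unfolding unit_current_potential_def component_def by auto
  have "y w \<le> y u" if "w \<in> ?D" "u \<in> ?D" for w u
    using max_principle[OF sg that(2) _ that(1)] harmonic by simp
  then have "\<forall>w\<in>?D. y w = y v" using self_in_component[OF v(1)] by (meson antisym)
  then have "real (card ?D) * y v = (\<Sum>w\<in>?D. y w)" by simp
  also have "\<dots> = 0" using pot v unfolding unit_current_potential_def by auto
  finally show ?thesis using card_component_pos[OF v(1), of E] by simp
qed

lemma potential_between:
  assumes sg: "simple_graph n E" and Est: "E s t" and pot: "unit_current_potential n E s t y"
    and v: "v < n"
  shows "y t \<le> y v \<and> y v \<le> y s"
proof -
  let ?K = "component n E s"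
  have s: "s < n" using sg Est unfolding simple_graph_def by auto
  have bounds: "y t \<le> y u \<and> y u \<le> y s" if "u \<in> ?K" for u
    using potential_bounds_on_component[OF sg Est pot that] .
  have sum_K: "(\<Sum>u\<in>?K. y u) = 0" using pot s unfolding unit_current_potential_def by auto
  have card_K: "0 < card ?K" using card_component_pos[OF s] .
  have "0 \<le> real (card ?K) * y s"
    using sum_mono[of ?K y "\<lambda>_. y s"] bounds sum_K by simp
  then have "0 \<le> y s" using card_K by (simp add: zero_le_mult_iff)
  moreover have "real (card ?K) * y t \<le> 0"
    using sum_mono[of ?K "\<lambda>_. y t" y] bounds sum_K by simp
  then have "y t \<le> 0" using card_K by (simp add: mult_le_0_iff)
  ultimately show ?thesis
    using bounds potential_vanishes_off_component[OF sg Est pot v] by (cases "v \<in> ?K") auto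
qed

lemma potential_sum_zero:
  assumes sg: "simple_graph n E" and Est: "E s t" and pot: "unit_current_potential n E s t y"
  shows "(\<Sum>v\<in>{0..<n}. y v) = 0"
proof -
  let ?K = "component n E s"
  have s: "s < n" using sg Est unfolding simple_graph_def by auto
  have "?K \<subseteq> {0..<n}" unfolding component_def by auto
  then have "(\<Sum>v\<in>{0..<n}. y v) = (\<Sum>v\<in>?K. y v) + (\<Sum>v\<in>{0..<n} - ?K. y v)"
    by (metis finite_atLeastLessThan sum.subset_diff add.commute)
  also have "(\<Sum>v\<in>{0..<n} - ?K. y v) = 0"
    using potential_vanishes_off_component[OF sg Est pot] by (intro sum.neutral) auto
  finally show ?thesis using pot s unfolding unit_current_potential_def by auto
qed

text \<open>The energy of the potential is the effective resistance between \<open>s\<close> and \<open>t\<close>, which is at most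
  the resistance \<open>1\<close> of the edge \<open>st\<close>.\<close>

lemma potential_energy_le:
  assumes sg: "simple_graph n E" and Est: "E s t" and pot: "unit_current_potential n E s t y"
  shows "dirichlet_energy n E y \<le> 2"
proof -
  have st: "s < n" "t < n" "s \<noteq> t" "E t s" using sg Est unfolding simple_graph_def by auto
  define r where "r = y s - y t"
  have "r \<ge> 0" using potential_between[OF sg Est pot st(1)] unfolding r_def by simp
  have "dirichlet_energy n E y / 2 = (\<Sum>i\<in>{0..<n}. y i * (\<Sum>k\<in>neighbours n E i. y i - y k))"
    by (rule laplacian_quadratic_form[OF sg, symmetric])
  also have "\<dots> = (\<Sum>i\<in>{0..<n}. (if i = s then y i else 0) - (if i = t then y i else 0))"
    using pot unfolding unit_current_potential_def by (intro sum.cong) auto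
  also have "\<dots> = r" using st unfolding r_def by (simp add: sum_subtractf)
  finally have energy: "dirichlet_energy n E y = 2 * r" by simp
  have "(\<Sum>p\<in>{(s, t), (t, s)}. (y (fst p) - y (snd p))\<^sup>2) \<le> dirichlet_energy n E y"
    unfolding dirichlet_energy_def using st Est
    by (intro sum_mono2 finite_edges) (auto simp: edges_def)
  then have "2 * r\<^sup>2 \<le> 2 * r" using st energy unfolding r_def by (simp add: power2_commute)
  then have "r \<le> 1" using \<open>r \<ge> 0\<close> by (cases "r = 0") (simp_all add: power2_eq_square mult_le_cancel_left1)
  then show ?thesis using energy by simp
qed

section \<open>Moore--Penrose inverses\<close>

lemma square_mat_eqI:
  assumes "A \<in> carrier_mat n n" "B \<in> carrier_mat n n"
    "\<And>i j. i < n \<Longrightarrow> j < n \<Longrightarrow> A $$ (i, j) = B $$ (i, j)"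
  shows "A = B"
  using assms by (intro eq_matI) auto

lemma penrose_conditions_unique:
  fixes A X Y :: "real mat"
  assumes A: "A \<in> carrier_mat n n" and X: "X \<in> carrier_mat n n" and Y: "Y \<in> carrier_mat n n"
    and X1: "A * X * A = A" and X2: "X * A * X = X"
    and X3: "transpose_mat (A * X) = A * X" and X4: "transpose_mat (X * A) = X * A"
    and Y1: "A * Y * A = A" and Y2: "Y * A * Y = Y"
    and Y3: "transpose_mat (A * Y) = A * Y" and Y4: "transpose_mat (Y * A) = Y * A"
  shows "X = Y"
proof -
  have AX: "A * X = A * Y"
  proof -
    have "A * X = transpose_mat (A * X)" using X3 by simp
    also have "\<dots> = transpose_mat (A * Y * A * X)" using Y1 by simp
    also have "\<dots> = transpose_mat (A * Y * (A * X))"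
      using A X Y by (subst assoc_mult_mat[of "A * Y"]) auto
    also have "\<dots> = transpose_mat (A * X) * transpose_mat (A * Y)"
      using A X Y by (subst transpose_mult[of _ n n _ n]) auto
    also have "\<dots> = A * X * (A * Y)" using X3 Y3 by simp
    also have "\<dots> = A * X * A * Y" by (rule assoc_mult_mat[symmetric]) (use A X Y in auto)
    also have "\<dots> = A * Y" using X1 by simp
    finally show ?thesis .
  qed
  have XA: "X * A = Y * A"
  proof -
    have "X * A = transpose_mat (X * A)" using X4 by simp
    also have "\<dots> = transpose_mat (X * (A * Y * A))" using Y1 by simp
    also have "X * (A * Y * A) = X * A * (Y * A)"
      using A X Y by (simp add: assoc_mult_mat[of X n n A n "Y * A" n])
    also have "transpose_mat \<dots> = transpose_mat (Y * A) * transpose_mat (X * A)"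
      using A X Y by (subst transpose_mult[of _ n n _ n]) auto
    also have "\<dots> = Y * A * (X * A)" using X4 Y4 by simp
    also have "\<dots> = Y * (A * X * A)"
      using A X Y by (simp add: assoc_mult_mat[of Y n n A n "X * A" n] assoc_mult_mat[of A n n X n A n])
    also have "\<dots> = Y * A" using X1 by simp
    finally show ?thesis .
  qed
  have "X = X * A * X" using X2 by simp
  also have "\<dots> = X * (A * X)" by (rule assoc_mult_mat) (use A X in auto)
  also have "\<dots> = X * (A * Y)" using AX by simp
  also have "\<dots> = X * A * Y" by (rule assoc_mult_mat[symmetric]) (use A X Y in auto)
  also have "\<dots> = Y * A * Y" using XA by simp
  also have "\<dots> = Y" using Y2 by simp
  finally show ?thesis .
qed

lemma pseudo_inverse_eqI:
  fixes A X :: "real mat"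
  assumes A: "A \<in> carrier_mat n n" and X: "X \<in> carrier_mat n n"
    and "A * X * A = A" "X * A * X = X"
    and "transpose_mat (A * X) = A * X" "transpose_mat (X * A) = X * A"
  shows "pseudo_inverse n A = X"
  unfolding pseudo_inverse_def
  by (rule the_equality) (use assms penrose_conditions_unique[OF A _ X] in blast)+

text \<open>With \<open>P\<close> the orthogonal projection onto the kernel of a symmetric \<open>A\<close> and \<open>Q = (A + P)\<^sup>-\<^sup>1\<close>,
  the pseudo-inverse of \<open>A\<close> is \<open>Q - P\<close>.\<close>

lemma inverse_plus_kernel_projection:
  fixes A P Q :: "real mat"
  assumes A: "A \<in> carrier_mat n n" and P: "P \<in> carrier_mat n n" and Q: "Q \<in> carrier_mat n n"
    and AP: "A * P = 0\<^sub>m n n" and PA: "P * A = 0\<^sub>m n n" and PP: "P * P = P"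
    and QL: "Q * (A + P) = 1\<^sub>m n" and QR: "(A + P) * Q = 1\<^sub>m n"
    and At: "transpose_mat A = A" and Pt: "transpose_mat P = P"
  shows "P * Q = P" "A * Q = 1\<^sub>m n - P" "Q * A = 1\<^sub>m n - P" "transpose_mat Q = Q"
proof -
  show PQ: "P * Q = P"
  proof -
    have "P * Q = P * (A + P) * Q" using A P by (simp add: mult_add_distrib_mat[OF P A P] PA PP)
    also have "\<dots> = P * ((A + P) * Q)" using A P Q by (intro assoc_mult_mat) auto
    also have "\<dots> = P" using QR P by simp
    finally show ?thesis .
  qed
  have QP: "Q * P = P"
  proof -
    have "Q * P = Q * ((A + P) * P)" using A P by (simp add: add_mult_distrib_mat[OF A P P] AP PP)
    also have "\<dots> = Q * (A + P) * P" using A P Q by (intro assoc_mult_mat[symmetric]) auto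
    also have "\<dots> = P" using QL P by simp
    finally show ?thesis .
  qed
  have AQ: "A * Q + P = 1\<^sub>m n" using QR add_mult_distrib_mat[OF A P Q] PQ by simp
  show "A * Q = 1\<^sub>m n - P"
  proof (rule square_mat_eqI[of _ n])
    fix i j assume "i < n" "j < n"
    then show "(A * Q) $$ (i, j) = (1\<^sub>m n - P) $$ (i, j)"
      using arg_cong[OF AQ, of "\<lambda>M. M $$ (i, j)"] A P Q by simp
  qed (use A P Q in auto)
  have QA: "Q * A + P = 1\<^sub>m n" using QL mult_add_distrib_mat[OF Q A P] QP by simp
  show "Q * A = 1\<^sub>m n - P"
  proof (rule square_mat_eqI[of _ n])
    fix i j assume "i < n" "j < n"
    then show "(Q * A) $$ (i, j) = (1\<^sub>m n - P) $$ (i, j)"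
      using arg_cong[OF QA, of "\<lambda>M. M $$ (i, j)"] A P Q by simp
  qed (use A P Q in auto)
  have "(A + P) * transpose_mat Q = 1\<^sub>m n"
    using arg_cong[OF QL, of transpose_mat] transpose_mult[OF Q, of "A + P" n] transpose_add[OF A P] At Pt A P
    by simp
  then have "Q * ((A + P) * transpose_mat Q) = Q" using Q by simp
  moreover have "Q * ((A + P) * transpose_mat Q) = transpose_mat Q"
    using A P Q QL by (simp flip: assoc_mult_mat[of Q n n "A + P" n "transpose_mat Q" n])
  ultimately show "transpose_mat Q = Q" by simp
qed

lemma penrose_conditions_inverse_minus_projection:
  fixes A P Q :: "real mat"
  assumes A: "A \<in> carrier_mat n n" and P: "P \<in> carrier_mat n n" and Q: "Q \<in> carrier_mat n n"
    and AP: "A * P = 0\<^sub>m n n" and PA: "P * A = 0\<^sub>m n n" and PP: "P * P = P"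
    and PQ: "P * Q = P" and AQ: "A * Q = 1\<^sub>m n - P" and QA: "Q * A = 1\<^sub>m n - P"
    and Pt: "transpose_mat P = P"
  shows "A * (Q - P) * A = A" "(Q - P) * A * (Q - P) = Q - P"
    "transpose_mat (A * (Q - P)) = A * (Q - P)" "transpose_mat ((Q - P) * A) = (Q - P) * A"
proof -
  have AX: "A * (Q - P) = 1\<^sub>m n - P"
    using mult_minus_distrib_mat[OF A Q P] AQ AP
    by simp (rule square_mat_eqI[of _ n], use P in auto)
  have XA: "(Q - P) * A = 1\<^sub>m n - P"
    using minus_mult_distrib_mat[OF Q P A] QA PA
    by simp (rule square_mat_eqI[of _ n], use P in auto)
  have PX: "P * (Q - P) = 0\<^sub>m n n"
    using mult_minus_distrib_mat[OF P Q P] PQ PP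
    by simp (rule square_mat_eqI[of _ n], use P in auto)
  have "transpose_mat (1\<^sub>m n - P) = 1\<^sub>m n - P"
    using transpose_minus[OF one_carrier_mat P] Pt by simp
  then show "transpose_mat (A * (Q - P)) = A * (Q - P)" "transpose_mat ((Q - P) * A) = (Q - P) * A"
    using AX XA by simp_all
  show "A * (Q - P) * A = A"
    using AX minus_mult_distrib_mat[OF one_carrier_mat P A] PA A
    by simp (rule square_mat_eqI[of _ n], use A in auto)
  show "(Q - P) * A * (Q - P) = Q - P"
    using XA minus_mult_distrib_mat[OF one_carrier_mat P minus_carrier_mat[OF P, of Q]] PX Q P
    by simp (rule square_mat_eqI[of _ n], use Q P in auto)
qed

section \<open>The Laplacian and the projection onto its kernel\<close>

definition component_projection :: "nat \<Rightarrow> (nat \<Rightarrow> nat \<Rightarrow> bool) \<Rightarrow> real mat" where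
  "component_projection n E =
     mat n n (\<lambda>(i, j). if E\<^sup>*\<^sup>* i j then 1 / real (card (component n E i)) else 0)"

lemma index_mult_mat_sum:
  fixes A B :: "real mat"
  assumes "A \<in> carrier_mat n n" "B \<in> carrier_mat n n" "i < n" "j < n"
  shows "(A * B) $$ (i, j) = (\<Sum>k\<in>{0..<n}. A $$ (i, k) * B $$ (k, j))"
  using assms by (simp add: scalar_prod_def)

lemma index_mult_mat_vec_sum:
  fixes A :: "real mat"
  assumes "A \<in> carrier_mat n n" "v \<in> carrier_vec n" "i < n"
  shows "(A *\<^sub>v v) $ i = (\<Sum>k\<in>{0..<n}. A $$ (i, k) * v $ k)"
  using assms by (simp add: scalar_prod_def)

lemma scalar_prod_self_sum: "(w :: real vec) \<bullet> w = (\<Sum>i\<in>{0..<dim_vec w}. (w $ i)\<^sup>2)"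
  unfolding scalar_prod_def by (simp add: power2_eq_square)

lemma laplacian_carrier: "laplacian n E \<in> carrier_mat n n"
  unfolding laplacian_def by simp

lemma component_projection_carrier: "component_projection n E \<in> carrier_mat n n"
  unfolding component_projection_def by simp

lemma index_laplacian:
  "i < n \<Longrightarrow> j < n \<Longrightarrow>
    laplacian n E $$ (i, j) = (if i = j then real (Defs.degree n E i) else if E i j then -1 else 0)"
  unfolding laplacian_def by simp

lemma index_component_projection:
  "i < n \<Longrightarrow> j < n \<Longrightarrow>
    component_projection n E $$ (i, j) = (if E\<^sup>*\<^sup>* i j then 1 / real (card (component n E i)) else 0)"
  unfolding component_projection_def by simp

lemma laplacian_row_sum:
  fixes f :: "nat \<Rightarrow> real"
  assumes sg: "simple_graph n E" and i: "i < n"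
  shows "(\<Sum>k\<in>{0..<n}. laplacian n E $$ (i, k) * f k) = (\<Sum>k\<in>neighbours n E i. f i - f k)"
proof -
  have "\<not> E i i" using sg unfolding simple_graph_def by auto
  then have "(\<Sum>k\<in>{0..<n}. laplacian n E $$ (i, k) * f k)
      = (\<Sum>k\<in>{0..<n}. (if k = i then real (Defs.degree n E i) * f i else 0) + (if E i k then - f k else 0))"
    using i by (intro sum.cong refl) (auto simp: index_laplacian)
  also have "\<dots> = real (Defs.degree n E i) * f i - (\<Sum>k\<in>neighbours n E i. f k)"
    using i by (simp add: sum.distrib sum.If_cases neighbours_def sum_negf Int_def conj_commute)
  also have "\<dots> = (\<Sum>k\<in>neighbours n E i. f i - f k)"
    by (simp add: sum_subtractf Defs.degree_def neighbours_def)
  finally show ?thesis .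
qed

lemma component_projection_row_sum:
  fixes f :: "nat \<Rightarrow> real"
  assumes i: "i < n"
  shows "(\<Sum>k\<in>{0..<n}. component_projection n E $$ (i, k) * f k)
    = (\<Sum>k\<in>component n E i. f k) / real (card (component n E i))"
proof -
  have "(\<Sum>k\<in>{0..<n}. component_projection n E $$ (i, k) * f k)
      = (\<Sum>k\<in>{0..<n}. if k \<in> component n E i then f k / real (card (component n E i)) else 0)"
    using i by (intro sum.cong refl) (auto simp: index_component_projection component_def)
  also have "\<dots> = (\<Sum>k\<in>component n E i. f k / real (card (component n E i)))"
    by (subst sum.If_cases) (auto simp: component_def Int_def intro!: sum.cong)
  finally show ?thesis by (simp add: sum_divide_distrib)
qed

lemma laplacian_mult_vec_index:
  assumes sg: "simple_graph n E" and v: "v \<in> carrier_vec n" and i: "i < n"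
  shows "(laplacian n E *\<^sub>v v) $ i = (\<Sum>k\<in>neighbours n E i. v $ i - v $ k)"
  using index_mult_mat_vec_sum[OF laplacian_carrier v i] laplacian_row_sum[OF sg i, of "\<lambda>k. v $ k"]
  by simp

lemma component_projection_mult_vec_index:
  assumes v: "v \<in> carrier_vec n" and i: "i < n"
  shows "(component_projection n E *\<^sub>v v) $ i
    = (\<Sum>k\<in>component n E i. v $ k) / real (card (component n E i))"
  using index_mult_mat_vec_sum[OF component_projection_carrier v i]
    component_projection_row_sum[OF i, of E "\<lambda>k. v $ k"]
  by simp

lemma index_component_projection_component:
  assumes sg: "simple_graph n E" and ij: "i < n" "j < n" and k: "k \<in> component n E i"
  shows "component_projection n E $$ (k, j) = component_projection n E $$ (i, j)"
proof -
  have ik: "E\<^sup>*\<^sup>* i k" "k < n" using k unfolding component_def by auto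
  have "E\<^sup>*\<^sup>* k j \<longleftrightarrow> E\<^sup>*\<^sup>* i j"
    using ik(1) simple_graph_reach_sym[OF sg ik(1)] by (meson rtranclp_trans)
  then show ?thesis using ij ik component_eq[OF sg ik(1)] by (simp add: index_component_projection)
qed

lemma transpose_component_projection:
  assumes sg: "simple_graph n E"
  shows "transpose_mat (component_projection n E) = component_projection n E"
proof (rule square_mat_eqI[of _ n])
  fix i j assume ij: "i < n" "j < n"
  have "component_projection n E $$ (i, j) = component_projection n E $$ (j, i)"
  proof (cases "E\<^sup>*\<^sup>* i j")
    case True
    then show ?thesis using ij simple_graph_reach_sym[OF sg True] component_eq[OF sg True]
      by (simp add: index_component_projection)
  next
    case False
    then have "\<not> E\<^sup>*\<^sup>* j i" using simple_graph_reach_sym[OF sg] by blast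
    then show ?thesis using ij False by (simp add: index_component_projection)
  qed
  then show "transpose_mat (component_projection n E) $$ (i, j) = component_projection n E $$ (i, j)"
    using ij component_projection_carrier[of n E] by simp
qed (use component_projection_carrier[of n E] in auto)

lemma transpose_laplacian:
  assumes sg: "simple_graph n E"
  shows "transpose_mat (laplacian n E) = laplacian n E"
proof (rule square_mat_eqI[of _ n])
  fix i j assume ij: "i < n" "j < n"
  have "laplacian n E $$ (i, j) = laplacian n E $$ (j, i)"
    using sg ij unfolding simple_graph_def by (auto simp: index_laplacian)
  then show "transpose_mat (laplacian n E) $$ (i, j) = laplacian n E $$ (i, j)"
    using ij laplacian_carrier[of n E] by simp
qed (use laplacian_carrier[of n E] in auto)

lemma laplacian_mult_component_projection:
  assumes sg: "simple_graph n E"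
  shows "laplacian n E * component_projection n E = 0\<^sub>m n n"
proof (rule square_mat_eqI[of _ n])
  fix i j assume ij: "i < n" "j < n"
  let ?P = "component_projection n E"
  have "(laplacian n E * ?P) $$ (i, j) = (\<Sum>k\<in>{0..<n}. laplacian n E $$ (i, k) * ?P $$ (k, j))"
    using ij by (intro index_mult_mat_sum laplacian_carrier component_projection_carrier)
  also have "\<dots> = (\<Sum>k\<in>neighbours n E i. ?P $$ (i, j) - ?P $$ (k, j))"
    by (rule laplacian_row_sum[OF sg ij(1)])
  also have "\<dots> = 0"
  proof (intro sum.neutral ballI)
    fix k assume "k \<in> neighbours n E i"
    then have "k \<in> component n E i" using ij unfolding neighbours_def component_def by auto
    then show "?P $$ (i, j) - ?P $$ (k, j) = 0"
      using index_component_projection_component[OF sg ij] by simp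
  qed
  finally show "(laplacian n E * ?P) $$ (i, j) = 0\<^sub>m n n $$ (i, j)" using ij by simp
qed (auto intro: mult_carrier_mat laplacian_carrier component_projection_carrier)

lemma component_projection_mult_laplacian:
  assumes sg: "simple_graph n E"
  shows "component_projection n E * laplacian n E = 0\<^sub>m n n"
proof -
  have "component_projection n E * laplacian n E
      = transpose_mat (laplacian n E * component_projection n E)"
    using transpose_mult[OF laplacian_carrier component_projection_carrier, of n E]
      transpose_laplacian[OF sg] transpose_component_projection[OF sg] by simp
  then show ?thesis using laplacian_mult_component_projection[OF sg] by simp
qed

lemma component_projection_idem:
  assumes sg: "simple_graph n E"
  shows "component_projection n E * component_projection n E = component_projection n E"
proof (rule square_mat_eqI[of _ n])
  fix i j assume ij: "i < n" "j < n"
  let ?P = "component_projection n E" and ?K = "component n E i"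
  have "(?P * ?P) $$ (i, j) = (\<Sum>k\<in>{0..<n}. ?P $$ (i, k) * ?P $$ (k, j))"
    using ij by (intro index_mult_mat_sum component_projection_carrier)
  also have "\<dots> = (\<Sum>k\<in>?K. ?P $$ (k, j)) / real (card ?K)"
    by (rule component_projection_row_sum[OF ij(1)])
  also have "\<dots> = (\<Sum>k\<in>?K. ?P $$ (i, j)) / real (card ?K)"
    using index_component_projection_component[OF sg ij] by simp
  also have "\<dots> = ?P $$ (i, j)" using card_component_pos[OF ij(1), of E] by simp
  finally show "(?P * ?P) $$ (i, j) = ?P $$ (i, j)" .
qed (auto intro: mult_carrier_mat component_projection_carrier)

lemma laplacian_quadratic_form_vec:
  assumes sg: "simple_graph n E" and v: "v \<in> carrier_vec n"
  shows "v \<bullet> (laplacian n E *\<^sub>v v) = dirichlet_energy n E (\<lambda>i. v $ i) / 2"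
proof -
  have "v \<bullet> (laplacian n E *\<^sub>v v) = (\<Sum>i\<in>{0..<n}. v $ i * (\<Sum>k\<in>neighbours n E i. v $ i - v $ k))"
    unfolding scalar_prod_def using v laplacian_mult_vec_index[OF sg v] laplacian_carrier[of n E]
    by (intro sum.cong) auto
  then show ?thesis using laplacian_quadratic_form[OF sg, of "\<lambda>i. v $ i"] by simp
qed

lemma dirichlet_energy_eq_0_imp_reach_eq:
  assumes sg: "simple_graph n E" and energy: "dirichlet_energy n E f = 0" and "E\<^sup>*\<^sup>* a b"
  shows "f b = f a"
  using assms(3)
proof (induction rule: rtranclp_induct)
  case (step b c)
  then have "(b, c) \<in> edges n E" using sg unfolding simple_graph_def edges_def by auto
  then have "f c = f b"
    using energy finite_edges[of n E] unfolding dirichlet_energy_def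
    by (subst (asm) sum_nonneg_eq_0_iff) auto
  then show ?case using step by simp
qed simp

text \<open>Both summands of \<open>v\<^sup>T (L + P) v = v\<^sup>T L v + |P v|\<^sup>2\<close> are nonnegative; if they vanish,
  \<open>v\<close> is constant on components and hence equal to \<open>P v = 0\<close>.\<close>

lemma laplacian_plus_projection_kernel:
  assumes sg: "simple_graph n E" and v: "v \<in> carrier_vec n"
    and kernel: "(laplacian n E + component_projection n E) *\<^sub>v v = 0\<^sub>v n"
  shows "v = 0\<^sub>v n"
proof -
  let ?L = "laplacian n E" and ?P = "component_projection n E"
  define w where "w = ?P *\<^sub>v v"
  have L: "?L \<in> carrier_mat n n" and P: "?P \<in> carrier_mat n n"
    by (rule laplacian_carrier, rule component_projection_carrier)
  have w: "w \<in> carrier_vec n" unfolding w_def using P v by simp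
  have "v \<bullet> w = v \<bullet> ((?P * ?P) *\<^sub>v v)" unfolding w_def component_projection_idem[OF sg] ..
  also have "\<dots> = v \<bullet> (?P *\<^sub>v w)" unfolding w_def using P v by simp
  also have "\<dots> = w \<bullet> w"
    using transpose_vec_mult_scalar[OF P w v] transpose_component_projection[OF sg]
    unfolding w_def by simp
  finally have vw: "v \<bullet> w = w \<bullet> w" .
  have "0 = v \<bullet> ((?L + ?P) *\<^sub>v v)" using kernel v by simp
  also have "\<dots> = v \<bullet> (?L *\<^sub>v v) + v \<bullet> w"
    unfolding w_def add_mult_distrib_mat_vec[OF L P v] using L P v by (simp add: scalar_prod_add_distrib)
  finally have "dirichlet_energy n E (\<lambda>i. v $ i) / 2 + (\<Sum>i\<in>{0..<n}. (w $ i)\<^sup>2) = 0"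
    using vw laplacian_quadratic_form_vec[OF sg v] scalar_prod_self_sum[of w] w by simp
  moreover have "0 \<le> (\<Sum>i\<in>{0..<n}. (w $ i)\<^sup>2)" by (intro sum_nonneg) auto
  ultimately have energy: "dirichlet_energy n E (\<lambda>i. v $ i) = 0" and w0: "(\<Sum>i\<in>{0..<n}. (w $ i)\<^sup>2) = 0"
    using dirichlet_energy_nonneg[of n E "\<lambda>i. v $ i"] by linarith+
  have "w $ i = v $ i" if i: "i < n" for i
  proof -
    have "(\<Sum>k\<in>component n E i. v $ k) = (\<Sum>k\<in>component n E i. v $ i)"
      using dirichlet_energy_eq_0_imp_reach_eq[OF sg energy] by (intro sum.cong) (auto simp: component_def)
    then show ?thesis
      using component_projection_mult_vec_index[OF v i] card_component_pos[OF i, of E] unfolding w_def by simp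
  qed
  moreover have "\<forall>i\<in>{0..<n}. (w $ i)\<^sup>2 = 0" using w0 by (subst sum_nonneg_eq_0_iff[symmetric]) auto
  ultimately show "v = 0\<^sub>v n" using v by (intro eq_vecI) auto
qed

lemma laplacian_plus_projection_invertible:
  assumes sg: "simple_graph n E"
  obtains Q where "Q \<in> carrier_mat n n"
    "Q * (laplacian n E + component_projection n E) = 1\<^sub>m n"
    "(laplacian n E + component_projection n E) * Q = 1\<^sub>m n"
proof -
  let ?M = "laplacian n E + component_projection n E"
  have M: "?M \<in> carrier_mat n n" by (intro add_carrier_mat laplacian_carrier component_projection_carrier)
  have "det ?M \<noteq> 0"
    unfolding det_0_iff_vec_prod_zero[OF M] using laplacian_plus_projection_kernel[OF sg] by blast
  from det_non_zero_imp_unit[OF M this, of undefined]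
  show ?thesis using that unfolding Units_def ring_mat_def by auto
qed

lemma laplacian_pseudo_inverse:
  assumes sg: "simple_graph n E"
  obtains X where "pseudo_inverse n (laplacian n E) = X" "X \<in> carrier_mat n n"
    "laplacian n E * X = 1\<^sub>m n - component_projection n E"
    "component_projection n E * X = 0\<^sub>m n n" "transpose_mat X = X"
proof -
  let ?L = "laplacian n E" and ?P = "component_projection n E"
  have L: "?L \<in> carrier_mat n n" and P: "?P \<in> carrier_mat n n"
    by (rule laplacian_carrier, rule component_projection_carrier)
  obtain Q where Q: "Q \<in> carrier_mat n n" and QL: "Q * (?L + ?P) = 1\<^sub>m n" and QR: "(?L + ?P) * Q = 1\<^sub>m n"
    using laplacian_plus_projection_invertible[OF sg] .
  note LP = laplacian_mult_component_projection[OF sg] and PL = component_projection_mult_laplacian[OF sg]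
    and PP = component_projection_idem[OF sg]
  note inv = inverse_plus_kernel_projection[OF L P Q LP PL PP QL QR transpose_laplacian[OF sg]
      transpose_component_projection[OF sg]]
  note penrose = penrose_conditions_inverse_minus_projection[OF L P Q LP PL PP inv(1-3)
      transpose_component_projection[OF sg]]
  have X: "Q - ?P \<in> carrier_mat n n" using P by (intro minus_carrier_mat)
  show ?thesis
  proof (rule that)
    show "pseudo_inverse n ?L = Q - ?P" by (rule pseudo_inverse_eqI[OF L X penrose])
    show "?L * (Q - ?P) = 1\<^sub>m n - ?P"
      using mult_minus_distrib_mat[OF L Q P] inv(2) LP
      by simp (rule square_mat_eqI[of _ n], use P in auto)
    show "?P * (Q - ?P) = 0\<^sub>m n n"
      using mult_minus_distrib_mat[OF P Q P] inv(1) PP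
      by simp (rule square_mat_eqI[of _ n], use P in auto)
    show "transpose_mat (Q - ?P) = Q - ?P"
      using transpose_minus[OF Q P] inv(4) transpose_component_projection[OF sg] by simp
  qed (rule X)
qed

lemma component_projection_mult_unit_diff:
  assumes sg: "simple_graph n E" and Est: "E s t"
  shows "component_projection n E *\<^sub>v (unit_vec n s - unit_vec n t) = (0\<^sub>v n :: real vec)"
proof (rule eq_vecI)
  let ?x = "unit_vec n s - unit_vec n t :: real vec"
  have st: "s < n" "t < n" using sg Est unfolding simple_graph_def by auto
  fix i assume "i < dim_vec (0\<^sub>v n :: real vec)"
  then have i: "i < n" by simp
  let ?K = "component n E i"
  have "E\<^sup>*\<^sup>* s t" "E\<^sup>*\<^sup>* t s" using Est simple_graph_reach_sym[OF sg] by auto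
  then have "s \<in> ?K \<longleftrightarrow> t \<in> ?K" using st unfolding component_def by (auto intro: rtranclp_trans)
  moreover have "(\<Sum>k\<in>?K. ?x $ k) = (\<Sum>k\<in>?K. (if k = s then 1 else 0) - (if k = t then 1 else 0))"
    using st by (intro sum.cong) (auto simp: component_def)
  ultimately have "(\<Sum>k\<in>?K. ?x $ k) = 0" by (simp add: sum_subtractf finite_component)
  then show "(component_projection n E *\<^sub>v ?x) $ i = 0\<^sub>v n $ i"
    using component_projection_mult_vec_index[of ?x n i E] i by simp
qed (simp add: component_projection_def)

lemma biharmonic_dist_eq_potential:
  assumes sg: "simple_graph n E" and Est: "E s t"
  obtains y where "unit_current_potential n E s t y"
    "(biharmonic_dist n E s t)\<^sup>2 = (\<Sum>i\<in>{0..<n}. (y i)\<^sup>2)"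
proof -
  let ?L = "laplacian n E" and ?P = "component_projection n E"
  have st: "s < n" "t < n" using sg Est unfolding simple_graph_def by auto
  obtain X where pinv: "pseudo_inverse n ?L = X" and X: "X \<in> carrier_mat n n"
    and LX: "?L * X = 1\<^sub>m n - ?P" and PX: "?P * X = 0\<^sub>m n n" and Xt: "transpose_mat X = X"
    using laplacian_pseudo_inverse[OF sg] .
  define x :: "real vec" where "x = unit_vec n s - unit_vec n t"
  define v where "v = X *\<^sub>v x"
  have x: "x \<in> carrier_vec n" and v: "v \<in> carrier_vec n" unfolding v_def x_def using X by auto
  have "?L *\<^sub>v v = (1\<^sub>m n - ?P) *\<^sub>v x"
    unfolding v_def LX[symmetric] by (simp add: assoc_mult_mat_vec[OF laplacian_carrier X x])
  also have "\<dots> = x"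
    using minus_mult_distrib_mat_vec[OF one_carrier_mat component_projection_carrier x]
      component_projection_mult_unit_diff[OF sg Est] x unfolding x_def by simp
  finally have Lv: "?L *\<^sub>v v = x" .
  have "?P *\<^sub>v v = (?P * X) *\<^sub>v x"
    unfolding v_def by (simp add: assoc_mult_mat_vec[OF component_projection_carrier X x])
  also have "\<dots> = 0\<^sub>v n" unfolding PX using x by (intro eq_vecI) (auto simp: scalar_prod_def)
  finally have Pv: "?P *\<^sub>v v = 0\<^sub>v n" .
  have "unit_current_potential n E s t (\<lambda>i. v $ i)"
    unfolding unit_current_potential_def
  proof (intro conjI allI impI)
    fix i assume i: "i < n"
    show "(\<Sum>k\<in>neighbours n E i. v $ i - v $ k) = (if i = s then 1 else 0) - (if i = t then 1 else 0)"
      using laplacian_mult_vec_index[OF sg v i] Lv i st unfolding x_def by simp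
    show "(\<Sum>k\<in>component n E i. v $ k) = 0"
      using component_projection_mult_vec_index[OF v i, of E] Pv i card_component_pos[OF i, of E] by simp
  qed
  moreover have "(biharmonic_dist n E s t)\<^sup>2 = (\<Sum>i\<in>{0..<n}. (v $ i)\<^sup>2)"
  proof -
    have "x \<bullet> ((X * X) *\<^sub>v x) = x \<bullet> (X *\<^sub>v v)" unfolding v_def using X x by simp
    also have "\<dots> = v \<bullet> v" using transpose_vec_mult_scalar[OF X v x] Xt unfolding v_def by simp
    also have "\<dots> = (\<Sum>i\<in>{0..<n}. (v $ i)\<^sup>2)" using scalar_prod_self_sum[of v] v by simp
    finally show ?thesis
      unfolding biharmonic_dist_def Let_def pinv x_def[symmetric] by (simp add: sum_nonneg)
  qed
  ultimately show ?thesis by (rule that)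
qed

theorem theorem5p4:
  "\<exists>C::real. C > 0 \<and>
     (\<forall>(n::nat) (E::nat \<Rightarrow> nat \<Rightarrow> bool) s t.
        simple_graph n E \<longrightarrow> E s t \<longrightarrow>
        (\<exists>S. S \<subseteq> {0..<n} \<and> s \<in> S \<and> t \<notin> S \<and>
             (biharmonic_dist n E s t)\<^sup>2
               \<le> C * real (max_degree n E) / (iso_ratio n E S)\<^sup>2))"
proof (intro exI[of _ 64] conjI allI impI)
  fix n :: nat and E :: "nat \<Rightarrow> nat \<Rightarrow> bool" and s t :: nat
  assume sg: "simple_graph n E" and Est: "E s t"
  obtain y where pot: "unit_current_potential n E s t y"
    and B: "(biharmonic_dist n E s t)\<^sup>2 = (\<Sum>i\<in>{0..<n}. (y i)\<^sup>2)"
    using biharmonic_dist_eq_potential[OF sg Est] .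
  obtain S where S: "S \<subseteq> {0..<n}" "s \<in> S" "t \<notin> S"
    and bound: "(iso_ratio n E S)\<^sup>2 * (\<Sum>i\<in>{0..<n}. (y i)\<^sup>2)
      \<le> 32 * real (max_degree n E) * dirichlet_energy n E y"
    using sweep_cut_bound_sum_squares[OF sg Est potential_between[OF sg Est pot]
        potential_sum_zero[OF sg Est pot]] by blast
  have "32 * real (max_degree n E) * dirichlet_energy n E y \<le> 32 * real (max_degree n E) * 2"
    using potential_energy_le[OF sg Est pot] by (rule mult_left_mono) simp
  then have "32 * real (max_degree n E) * dirichlet_energy n E y \<le> 64 * real (max_degree n E)"
    by simp
  with bound have "(iso_ratio n E S)\<^sup>2 * (\<Sum>i\<in>{0..<n}. (y i)\<^sup>2) \<le> 64 * real (max_degree n E)"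
    by linarith
  moreover have "0 < (iso_ratio n E S)\<^sup>2" using iso_ratio_pos[OF sg Est S] by simp
  ultimately have "(\<Sum>i\<in>{0..<n}. (y i)\<^sup>2) \<le> 64 * real (max_degree n E) / (iso_ratio n E S)\<^sup>2"
    by (simp add: pos_le_divide_eq mult.commute)
  then show "\<exists>S. S \<subseteq> {0..<n} \<and> s \<in> S \<and> t \<notin> S \<and>
      (biharmonic_dist n E s t)\<^sup>2 \<le> 64 * real (max_degree n E) / (iso_ratio n E S)\<^sup>2"
    unfolding B using S by blast
qed simp

end
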